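(* Suppose $G$ is continuous. If $\mathbb{E}_{v\sim F}\left[\int_0^{b^*(v,0)}G(y)\,dy\right]=0$, then for any credibility $\alpha_0\in[0,1]$, no bidding algorithm can obtain positive expected reward.
   Context: Setting: repeated non-credible second-price auction; values $v\in[0,1]$ drawn i.i.d. from distribution $F$; highest competing bid $d$ drawn from distribution $G$ (CDF $G$) independently; a bidder bidding $b$ wins if $b\ge d$ and then pays $\alpha_0d+(1-\alpha_0)b$, receiving reward $v$ minus payment (and $0$ if she loses). Define $r(v,b,\alpha)=(v-b)G(b)+\alpha\int_0^bG(y)\,dy$ (the expected reward of bid $b$ with value $v$ under credibility $\alpha$) and $b^*(v,\alpha)=\arg\max_b r(v,b,\alpha)$, taking the largest maximizer in case of ties. *)

theory Defs
  imports "HOL-Probability.Probability"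
begin

text \<open>Expected reward of bid b with value v under credibility alpha, when the
highest competing bid has CDF G:  r(v,b,alpha) = (v - b) G(b) + alpha * int_0^b G(y) dy.\<close>
definition reward :: "(real \<Rightarrow> real) \<Rightarrow> real \<Rightarrow> real \<Rightarrow> real \<Rightarrow> real" where
  "reward G v b \<alpha> = (v - b) * G b + \<alpha> * integral {0..b} G"

definition bstar :: "(real \<Rightarrow> real) \<Rightarrow> real \<Rightarrow> real \<Rightarrow> real" where
  "bstar G v \<alpha> = (GREATEST b. 0 \<le> b \<and> (\<forall>b'\<ge>0. reward G v b' \<alpha> \<le> reward G v b \<alpha>))"

end

theory Submission
  imports Defs
begin

text \<open>With zero credibility the largest optimal bid \<open>b*(v)\<close> is nondecreasing in \<open>v\<close>, so
the integrand \<open>v \<mapsto> \<integral>{0..b*(v)} G\<close> is monotone, bounded and nonnegative; having mean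
zero, it vanishes for almost every value \<open>v\<close>. For such \<open>v\<close> the continuous CDF \<open>G\<close>
vanishes on \<open>[0, b*(v)]\<close>, so the optimal zero-credibility reward is \<open>0\<close>; hence
\<open>(v - b) G(b) \<le> 0\<close> for all bids and \<open>G\<close> vanishes on \<open>[0, v]\<close>. A bid \<open>b > v\<close> then
overpays by \<open>(b - v) G(b)\<close>, which dominates any credibility rebate
\<open>\<alpha> \<integral>{v..b} G \<le> (b - v) G(b)\<close>.\<close>

lemma reward_zero_credibility [simp]: "reward G v b 0 = (v - b) * G b"
  by (simp add: reward_def)

lemma continuous_vanishing_left_imp_zero:
  fixes f :: "real \<Rightarrow> real"
  assumes "continuous_on UNIV f" and "\<And>x. x < s \<Longrightarrow> f x = 0"
  shows "f s = 0"
proof -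
  have "closed {x. f x = 0}"
    using assms(1) by (intro closed_Collect_eq continuous_on_const)
  then have "closure {..<s} \<subseteq> {x. f x = 0}"
    using assms(2) by (intro closure_minimal) auto
  then show ?thesis by auto
qed

lemma greatest_maximizer_on_nonneg_reals:
  fixes f :: "real \<Rightarrow> real"
  assumes cont: "continuous_on UNIV f" and decay: "eventually (\<lambda>b. f b < f 0) at_top"
  shows "\<exists>m. 0 \<le> m \<and> (\<forall>b\<ge>0. f b \<le> f m) \<and> (\<forall>m'. 0 \<le> m' \<and> (\<forall>b\<ge>0. f b \<le> f m') \<longrightarrow> m' \<le> m)"
proof -
  obtain C where C: "\<And>b. C \<le> b \<Longrightarrow> f b < f 0"
    using decay by (auto simp: eventually_at_top_linorder)
  have "0 < C" using C[of 0] by force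
  have "continuous_on {0..C} f"
    using cont by (rule continuous_on_subset) simp
  then obtain m0 where m0: "m0 \<in> {0..C}" "\<And>b. b \<in> {0..C} \<Longrightarrow> f b \<le> f m0"
    using continuous_attains_sup[of "{0..C}" f] \<open>0 < C\<close> by auto
  have m0_max: "f b \<le> f m0" if "0 \<le> b" for b
    using m0 C[of b] \<open>0 < C\<close> that by (cases "b \<le> C") (auto intro: less_imp_le order_trans)
  define M where "M = {0..C} \<inter> f -` {f m0..}"
  have "compact M"
    unfolding M_def using cont
    by (intro compact_Int_closed closed_vimage) (auto simp: continuous_on_eq_continuous_at)
  moreover have "m0 \<in> M" using m0 by (simp add: M_def)
  ultimately obtain m where m: "m \<in> M" "\<And>b. b \<in> M \<Longrightarrow> b \<le> m"
    using compact_attains_sup[of M] by auto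
  have "m' \<in> M" if "0 \<le> m'" "\<forall>b\<ge>0. f b \<le> f m'" for m'
  proof -
    have "f m0 \<le> f m'" "f 0 \<le> f m'" using that m0 by auto
    then have "m' < C" using C[of m'] by (cases "m' < C") auto
    with \<open>f m0 \<le> f m'\<close> that show ?thesis by (simp add: M_def)
  qed
  moreover have "f b \<le> f m" if "0 \<le> b" for b
    using m0_max[OF that] m(1) by (simp add: M_def)
  ultimately show ?thesis
    using m by (intro exI[of _ m]) (auto simp: M_def)
qed

lemma integrable_mono_AE_interval:
  fixes h :: "real \<Rightarrow> real"
  assumes "finite_measure M" "sets M = sets borel" "mono h" "AE x in M. x \<in> {a..b}"
  shows "integrable M h"
proof -
  interpret finite_measure M by fact
  have "AE x in M. norm (h x) \<le> max \<bar>h a\<bar> \<bar>h b\<bar>"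
    using assms(4)
  proof eventually_elim
    case (elim x)
    then have "h a \<le> h x" "h x \<le> h b" using monoD[OF \<open>mono h\<close>] by auto
    then show ?case by simp
  qed
  moreover have "h \<in> borel_measurable M"
    using borel_measurable_mono[OF \<open>mono h\<close>] assms(2) by (simp cong: measurable_cong_sets)
  ultimately show ?thesis by (rule integrable_const_bound)
qed

lemma AE_pair_measure_snd:
  assumes "sigma_finite_measure M2" and "AE y in M2. P y"
  shows "AE x in M1 \<Otimes>\<^sub>M M2. P (snd x)"
proof -
  interpret M2: sigma_finite_measure M2 by fact
  obtain N where N: "N \<in> null_sets M2" "{y \<in> space M2. \<not> P y} \<subseteq> N"
    using assms(2) unfolding eventually_ae_filter by blast
  then have "space M1 \<times> N \<in> null_sets (M1 \<Otimes>\<^sub>M M2)" by blast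
  then show ?thesis
    by (rule AE_I') (use N(2) in \<open>auto simp: space_pair_measure\<close>)
qed

locale competing_bid_cdf =
  fixes G :: "real \<Rightarrow> real"
  assumes G_mono: "\<And>x y. x \<le> y \<Longrightarrow> G x \<le> G y"
    and G_nonneg: "\<And>x. 0 \<le> G x"
    and G_continuous: "continuous_on UNIV G"
    and G_somewhere_pos: "\<exists>B. 0 < G B"
begin

lemma G_integrable: "G integrable_on {a..b}"
  using G_continuous by (intro integrable_continuous_interval) (auto intro: continuous_on_subset)

lemma eventually_reward_below_zero_bid: "eventually (\<lambda>b. (v - b) * G b < v * G 0) at_top"
proof -
  obtain B where B: "0 < G B" using G_somewhere_pos by blast
  have bound: "(v - b) * G b < v * G 0"
    if "max B v \<le> b" "v - v * G 0 / G B < b" for b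
  proof -
    have "(v - b) * G b \<le> (v - b) * G B"
      using that G_mono[of B b] by (intro mult_left_mono_neg) auto
    also have "\<dots> < v * G 0"
      using that(2) B by (simp add: field_simps)
    finally show ?thesis .
  qed
  show ?thesis
    using eventually_ge_at_top[of "max B v"] eventually_gt_at_top[of "v - v * G 0 / G B"]
    by eventually_elim (rule bound)
qed

lemma bstar_greatest_optimal:
  shows bstar_nonneg: "0 \<le> bstar G v 0"
    and bstar_optimal: "0 \<le> b \<Longrightarrow> reward G v b 0 \<le> reward G v (bstar G v 0) 0"
    and bstar_greatest: "0 \<le> m \<Longrightarrow> \<forall>b\<ge>0. reward G v b 0 \<le> reward G v m 0 \<Longrightarrow> m \<le> bstar G v 0"
proof -
  define P where "P m \<longleftrightarrow> 0 \<le> m \<and> (\<forall>b\<ge>0. reward G v b 0 \<le> reward G v m 0)" for m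
  have "continuous_on UNIV (\<lambda>b. (v - b) * G b)"
    by (intro continuous_intros G_continuous)
  then obtain m where m: "P m" "\<And>m'. P m' \<Longrightarrow> m' \<le> m"
    using greatest_maximizer_on_nonneg_reals[of "\<lambda>b. (v - b) * G b"] eventually_reward_below_zero_bid
    unfolding P_def by auto
  have "bstar G v 0 = m"
    unfolding bstar_def by (rule Greatest_equality) (use m in \<open>auto simp: P_def\<close>)
  then show "0 \<le> bstar G v 0" "0 \<le> b \<Longrightarrow> reward G v b 0 \<le> reward G v (bstar G v 0) 0"
    "0 \<le> m' \<Longrightarrow> \<forall>b\<ge>0. reward G v b 0 \<le> reward G v m' 0 \<Longrightarrow> m' \<le> bstar G v 0" for m'
    using m by (auto simp: P_def)
qed

text \<open>Single crossing: raising the value from \<open>v\<^sub>1\<close> to \<open>v\<^sub>2\<close> adds \<open>(v\<^sub>2 - v\<^sub>1) G(b)\<close>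
to the reward, which favours higher bids.\<close>
lemma bstar_mono:
  assumes "v1 \<le> v2"
  shows "bstar G v1 0 \<le> bstar G v2 0"
proof (rule ccontr)
  let ?b1 = "bstar G v1 0" and ?b2 = "bstar G v2 0"
  assume "\<not> ?b1 \<le> ?b2"
  then have "?b2 < ?b1" by simp
  have "reward G v1 ?b2 0 \<le> reward G v1 ?b1 0"
    using bstar_optimal bstar_nonneg by blast
  moreover have "(v2 - v1) * G ?b2 \<le> (v2 - v1) * G ?b1"
    using assms G_mono[of ?b2 ?b1] \<open>?b2 < ?b1\<close> by (intro mult_left_mono) auto
  ultimately have "reward G v2 ?b2 0 \<le> reward G v2 ?b1 0"
    by (simp add: algebra_simps)
  then have "\<forall>b\<ge>0. reward G v2 b 0 \<le> reward G v2 ?b1 0"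
    using bstar_optimal by (blast intro: order_trans)
  then have "?b1 \<le> ?b2"
    using bstar_greatest bstar_nonneg by blast
  with \<open>?b2 < ?b1\<close> show False by simp
qed

lemma integral_bstar_nonneg: "0 \<le> integral {0..bstar G v 0} G"
  using G_nonneg by (intro integral_nonneg G_integrable) auto

lemma mono_integral_bstar: "mono (\<lambda>v. integral {0..bstar G v 0} G)"
  using G_nonneg bstar_nonneg bstar_mono
  by (intro monoI integral_subset_le G_integrable) auto

lemma reward_nonpos_if_G_vanishes_to_value:
  assumes "0 \<le> v" and G_zero: "\<And>x. x \<le> v \<Longrightarrow> G x = 0" and "0 \<le> \<alpha>" "\<alpha> \<le> 1"
  shows "reward G v b \<alpha> \<le> 0"
proof (cases "b \<le> v")
  case True
  then have "integral {0..b} G = integral {0..b} (\<lambda>_. 0)"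
    using G_zero by (intro integral_cong) auto
  then show ?thesis using True G_zero by (simp add: reward_def)
next
  case False
  have "integral {0..b} G = integral {0..v} G + integral {v..b} G"
    using False \<open>0 \<le> v\<close> by (intro Henstock_Kurzweil_Integration.integral_combine[symmetric] G_integrable) auto
  also have "integral {0..v} G = 0"
    using G_zero integral_cong[of "{0..v}" G "\<lambda>_. 0"] by simp
  also have "integral {v..b} G \<le> integral {v..b} (\<lambda>_. G b)"
    using G_mono by (intro integral_le G_integrable) auto
  finally have "integral {0..b} G \<le> (b - v) * G b"
    using False by simp
  moreover have "\<alpha> * integral {0..b} G \<le> integral {0..b} G"
    using assms G_nonneg by (intro mult_left_le_one_le integral_nonneg G_integrable) auto
  ultimately show ?thesis by (simp add: reward_def algebra_simps)
qed

end

locale nonneg_competing_bid_cdf = competing_bid_cdf +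
  assumes G_neg: "\<And>x. x < 0 \<Longrightarrow> G x = 0"
begin

lemma G_zero: "G 0 = 0"
  using G_continuous G_neg by (rule continuous_vanishing_left_imp_zero)

lemma G_vanishes_to_bstar:
  assumes "integral {0..bstar G v 0} G = 0" and "x \<le> bstar G v 0"
  shows "G x = 0"
proof -
  consider "x \<le> 0" | "0 < x" by linarith
  then show ?thesis
  proof cases
    case 1
    then show ?thesis using G_neg G_zero by (cases "x = 0") auto
  next
    case 2
    then have "\<forall>y\<in>{0..bstar G v 0}. G y = 0"
      using assms G_nonneg G_continuous
      by (subst integral_eq_0_iff[symmetric]) (auto intro: continuous_on_subset)
    then show ?thesis using 2 assms(2) by simp
  qed
qed

lemma G_vanishes_to_value:
  assumes "integral {0..bstar G v 0} G = 0" and "x \<le> v"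
  shows "G x = 0"
proof -
  have "G (bstar G v 0) = 0"
    using G_vanishes_to_bstar[OF assms(1)] by simp
  then have loss: "(v - b) * G b \<le> 0" if "0 \<le> b" for b
    using bstar_optimal[where v=v, OF that] by simp
  have below: "G y = 0" if "y < v" for y
  proof (cases "y < 0")
    case False
    then have "G y \<le> 0"
      using loss[of y] \<open>y < v\<close> by (simp add: mult_le_0_iff)
    then show ?thesis using G_nonneg[of y] by simp
  qed (use G_neg in simp)
  have "G v = 0"
    using G_continuous below by (rule continuous_vanishing_left_imp_zero)
  then show ?thesis
    using below assms(2) by (cases "x = v") simp_all
qed

lemma reward_nonpos_if_integral_bstar_zero:
  assumes "0 \<le> v" "integral {0..bstar G v 0} G = 0" "0 \<le> \<alpha>" "\<alpha> \<le> 1"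
  shows "reward G v b \<alpha> \<le> 0"
  using assms(1) G_vanishes_to_value[OF assms(2)] assms(3,4)
  by (rule reward_nonpos_if_G_vanishes_to_value)

end

lemma nonneg_competing_bid_cdf_cdf:
  assumes "real_distribution D" and "AE d in D. 0 \<le> d" and "continuous_on UNIV (cdf D)"
  shows "nonneg_competing_bid_cdf (cdf D)"
proof -
  interpret D: real_distribution D by fact
  have "\<exists>B. 0 < cdf D B"
    using order_tendstoD(1)[OF D.cdf_lim_at_top_prob, of 0]
    by (auto simp: eventually_at_top_linorder)
  moreover have "cdf D x = 0" if "x < 0" for x
  proof -
    have "AE d in D. d \<notin> {..x}"
      using assms(2) by eventually_elim (use that in auto)
    then have "{..x} \<in> null_sets D"
      by (subst AE_iff_null_sets) auto
    then show ?thesis by (simp add: cdf_def measure_eq_0_null_sets)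
  qed
  ultimately show ?thesis
    using assms(3) D.cdf_nondecreasing D.cdf_nonneg
    by unfold_locales auto
qed

theorem lemma10:
  fixes F D :: "real measure"
  assumes F_prob: "prob_space F" and F_sets: "sets F = sets borel"
    and F_supp: "AE v in F. v \<in> {0..1}"
    and D_prob: "prob_space D" and D_sets: "sets D = sets borel"
    and D_nonneg: "AE d in D. 0 \<le> d"
    and G_cont: "continuous_on UNIV (cdf D)"
    and hyp: "(\<integral>v. integral {0..bstar (cdf D) v 0} (cdf D) \<partial>F) = 0"
  shows "\<forall>\<alpha>0\<in>{0..1}. \<forall>W (\<beta> :: 'w \<Rightarrow> real \<Rightarrow> real).
           prob_space W \<longrightarrow> (\<lambda>(w, v). \<beta> w v) \<in> borel_measurable (W \<Otimes>\<^sub>M F) \<longrightarrow>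
           \<not> ((\<integral>(w, v). reward (cdf D) v (\<beta> w v) \<alpha>0 \<partial>(W \<Otimes>\<^sub>M F)) > 0)"
proof (intro ballI allI impI)
  fix \<alpha>0 :: real and W :: "'w measure" and \<beta> :: "'w \<Rightarrow> real \<Rightarrow> real"
  assume "\<alpha>0 \<in> {0..1}"
  interpret F: prob_space F by (rule F_prob)
  interpret G: nonneg_competing_bid_cdf "cdf D"
    using D_prob D_sets D_nonneg G_cont
    by (intro nonneg_competing_bid_cdf_cdf) (simp add: real_distribution_def real_distribution_axioms_def)
  have "integrable F (\<lambda>v. integral {0..bstar (cdf D) v 0} (cdf D))"
    using F_sets F_supp G.mono_integral_bstar
    by (intro integrable_mono_AE_interval) unfold_locales
  then have "AE v in F. integral {0..bstar (cdf D) v 0} (cdf D) = 0"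
    using hyp G.integral_bstar_nonneg by (subst integral_nonneg_eq_0_iff_AE[symmetric]) auto
  then have "AE v in F. \<forall>b. reward (cdf D) v b \<alpha>0 \<le> 0"
    using F_supp by eventually_elim (use \<open>\<alpha>0 \<in> {0..1}\<close> G.reward_nonpos_if_integral_bstar_zero in auto)
  then have "AE x in W \<Otimes>\<^sub>M F. \<forall>b. reward (cdf D) (snd x) b \<alpha>0 \<le> 0"
    by (intro AE_pair_measure_snd) unfold_locales
  then have "AE x in W \<Otimes>\<^sub>M F. 0 \<le> - (case x of (w, v) \<Rightarrow> reward (cdf D) v (\<beta> w v) \<alpha>0)"
    by eventually_elim (auto split: prod.splits)
  from integral_nonneg_AE[OF this]
  show "\<not> (\<integral>(w, v). reward (cdf D) v (\<beta> w v) \<alpha>0 \<partial>(W \<Otimes>\<^sub>M F)) > 0"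
    by simp
qed

end
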